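(* Let $V$ be a real symmetric $d\times d$ matrix and $W$ a complex Hermitian $d\times d$ matrix such that $V\ge W$ (i.e. $V-W$ is positive semidefinite). Then $$\mathrm{tr}\,V\;\ge\;\mathrm{tr}\,\mathrm{Re}\,W+\mathrm{tr}\,|\mathrm{Im}\,W|.$$
   Context: For a complex matrix $W$, $\bar W$ denotes the entrywise complex conjugate, $\mathrm{Re}\,W=(W+\bar W)/2$ and $\mathrm{Im}\,W=(W-\bar W)/(2i)$; for a Hermitian $W$, $\mathrm{Re}\,W$ is real symmetric and $\mathrm{Im}\,W$ is real antisymmetric. For any matrix $A$, $|A|=(A^*A)^{1/2}$. *)

theory Defs
  imports "HOL-Analysis.Analysis"
begin

definition cnj_mat :: "complex^'d^'d \<Rightarrow> complex^'d^'d" where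
  "cnj_mat W = (\<chi> i j. cnj (W $ i $ j))"

definition adjoint_mat :: "complex^'d^'d \<Rightarrow> complex^'d^'d" where
  "adjoint_mat W = transpose (cnj_mat W)"

definition hermitian_mat :: "complex^'d^'d \<Rightarrow> bool" where
  "hermitian_mat W \<longleftrightarrow> adjoint_mat W = W"

definition psd_cmat :: "complex^'d^'d \<Rightarrow> bool" where
  "psd_cmat A \<longleftrightarrow> hermitian_mat A \<and>
     (\<forall>x::complex^'d. Re (\<Sum>i\<in>UNIV. \<Sum>j\<in>UNIV. cnj (x $ i) * A $ i $ j * x $ j) \<ge> 0)"

definition symmetric_mat :: "real^'d^'d \<Rightarrow> bool" where
  "symmetric_mat V \<longleftrightarrow> transpose V = V"

definition psd_rmat :: "real^'d^'d \<Rightarrow> bool" where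
  "psd_rmat A \<longleftrightarrow> symmetric_mat A \<and> (\<forall>x::real^'d. x \<bullet> (A *v x) \<ge> 0)"

definition cmat_of_rmat :: "real^'d^'d \<Rightarrow> complex^'d^'d" where
  "cmat_of_rmat V = (\<chi> i j. complex_of_real (V $ i $ j))"

definition Re_mat :: "complex^'d^'d \<Rightarrow> real^'d^'d" where
  "Re_mat W = (\<chi> i j. Re (W $ i $ j))"

definition Im_mat :: "complex^'d^'d \<Rightarrow> real^'d^'d" where
  "Im_mat W = (\<chi> i j. Im (W $ i $ j))"

text \<open>|A| = (A^* A)^{1/2}: the unique positive semidefinite square root of A^T A.\<close>
definition abs_mat :: "real^'d^'d \<Rightarrow> real^'d^'d" where
  "abs_mat A = (THE B. psd_rmat B \<and> B ** B = transpose A ** A)"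

end

theory Submission
  imports Defs
begin

(*
  Write K = Im W, which is antisymmetric, and S = V - Re W. Testing V - W >= 0 on u + i v gives
  u.Su + v.Sv + u.Kv - v.Ku >= 0 for all real u, v. In an orthonormal eigenbasis (b) of K^T K we
  have |K| b = |Kb| b, so tr |K| = sum |Kb|. Because K is antisymmetric, the unit vectors
  w = Kb/|Kb| (w = b when Kb = 0) form a second orthonormal basis, and the inequality at u = b,
  v = w reads 2 |Kb| <= b.Sb + w.Sw. Summing over b yields 2 tr |K| <= 2 tr S.
*)

lemma inner_matrix_vector_transpose:
  "x \<bullet> ((A::real^'n^'m) *v y) = (transpose A *v x) \<bullet> y"
  by (simp add: dot_lmul_matrix)

lemma matrix_vector_mult_uminus_left: "(- A) *v x = - (A *v (x::real^'n))"
  by (simp add: vec_eq_iff matrix_vector_mult_def sum_negf)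

lemma antisymmetric_inner_matrix_vector:
  fixes K :: "real^'n^'n"
  assumes "transpose K = - K"
  shows "x \<bullet> (K *v y) = - ((K *v x) \<bullet> y)"
  using inner_matrix_vector_transpose[of x K y] by (simp add: assms matrix_vector_mult_uminus_left)

lemma symmetric_matrix_vector_inner_self:
  fixes A :: "real^'n^'n"
  assumes "transpose A = A"
  shows "(A *v x) \<bullet> (A *v x) = x \<bullet> ((A ** A) *v x)"
  by (metis assms inner_matrix_vector_transpose matrix_vector_mul_assoc)

lemma psd_form_null_vector_orthogonal:
  fixes R :: "real^'n^'n"
  assumes sym: "transpose R = R" and U: "subspace U"
    and nonneg: "\<And>z. z \<in> U \<Longrightarrow> 0 \<le> z \<bullet> (R *v z)"
    and x: "x \<in> U" and y: "y \<in> U" and null: "x \<bullet> (R *v x) = 0"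
  shows "y \<bullet> (R *v x) = 0"
proof (rule ccontr)
  define a where "a = y \<bullet> (R *v x)"
  define c where "c = y \<bullet> (R *v y)"
  assume "y \<bullet> (R *v x) \<noteq> 0"
  then have "a \<noteq> 0" by (simp add: a_def)
  have "0 \<le> c" using nonneg[OF y] by (simp add: c_def)
  have expand: "(x + t *\<^sub>R y) \<bullet> (R *v (x + t *\<^sub>R y)) = 2 * t * a + t\<^sup>2 * c" for t
  proof -
    have "x \<bullet> (R *v y) = a"
      using inner_matrix_vector_transpose[of x R y] by (simp add: sym a_def inner_commute)
    then show ?thesis
      by (simp add: null a_def c_def matrix_vector_right_distrib matrix_vector_mult_scaleR
          inner_add_left inner_add_right power2_eq_square algebra_simps)
  qed
  define t where "t = - a / (c + 1)"
  have "0 \<le> 2 * t * a + t\<^sup>2 * c"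
    using nonneg[of "x + t *\<^sub>R y"] U x y by (simp add: expand subspace_add subspace_scale)
  also have "2 * t * a + t\<^sup>2 * c = a\<^sup>2 / (c + 1) * (c / (c + 1) - 2)"
    by (simp add: t_def power2_eq_square algebra_simps)
  also have "\<dots> < 0"
    using \<open>a \<noteq> 0\<close> \<open>0 \<le> c\<close> by (intro mult_pos_neg) (auto simp: divide_less_eq)
  finally show False by simp
qed

lemma symmetric_eigenvector_in_invariant_subspace:
  fixes A :: "real^'n^'n"
  assumes sym: "transpose A = A" and U: "subspace U" and "y \<in> U" "y \<noteq> 0"
    and invariant: "\<And>z. z \<in> U \<Longrightarrow> A *v z \<in> U"
  obtains x where "x \<in> U" "norm x = 1" "A *v x = (x \<bullet> (A *v x)) *\<^sub>R x"
proof -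
  define Sph where "Sph = U \<inter> sphere 0 1"
  have "compact Sph"
    unfolding Sph_def by (intro closed_Int_compact closed_subspace U compact_sphere)
  moreover have "y /\<^sub>R norm y \<in> Sph"
    using \<open>y \<in> U\<close> \<open>y \<noteq> 0\<close> U by (simp add: Sph_def subspace_scale)
  moreover have "continuous_on Sph (\<lambda>x. x \<bullet> (A *v x))"
    by (intro continuous_intros linear_continuous_on matrix_vector_mul_linear)
  ultimately obtain x where "x \<in> Sph" and max: "\<And>z. z \<in> Sph \<Longrightarrow> z \<bullet> (A *v z) \<le> x \<bullet> (A *v x)"
    using continuous_attains_sup[of Sph] by blast
  then have "x \<in> U" and "norm x = 1" by (auto simp: Sph_def)
  \<comment> \<open>\<open>x\<close> maximises the form on the unit sphere of \<open>U\<close>, so \<open>l I - A\<close> is positive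
     semidefinite on \<open>U\<close> with null vector \<open>x\<close>, hence annihilates \<open>x\<close>.\<close>
  define l where "l = x \<bullet> (A *v x)"
  define R where "R = l *\<^sub>R mat 1 - A"
  have R_apply: "R *v z = l *\<^sub>R z - A *v z" for z
    by (simp add: R_def matrix_vector_mult_diff_rdistrib scaleR_matrix_vector_assoc[symmetric])
  have "transpose R = R"
    using sym by (simp add: R_def transpose_def vec_eq_iff mat_def)
  moreover have "0 \<le> z \<bullet> (R *v z)" if "z \<in> U" for z
  proof (cases "z = 0")
    case False
    have "z /\<^sub>R norm z \<in> Sph" using False \<open>z \<in> U\<close> U by (simp add: Sph_def subspace_scale)
    then have "(z /\<^sub>R norm z) \<bullet> (A *v (z /\<^sub>R norm z)) \<le> l" using max l_def by blast
    then have "z \<bullet> (A *v z) \<le> l * (norm z)\<^sup>2"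
      using False by (simp add: matrix_vector_mult_scaleR power2_eq_square field_simps)
    then show ?thesis by (simp add: R_apply inner_diff_right power2_norm_eq_inner)
  qed simp
  moreover have "x \<bullet> (R *v x) = 0"
    using \<open>norm x = 1\<close> by (simp add: R_apply inner_diff_right l_def power2_norm_eq_inner[symmetric])
  moreover have "R *v x \<in> U"
    using \<open>x \<in> U\<close> invariant U by (simp add: R_apply subspace_diff subspace_scale)
  ultimately have "(R *v x) \<bullet> (R *v x) = 0"
    using psd_form_null_vector_orthogonal[OF _ U _ \<open>x \<in> U\<close>] by blast
  then have "A *v x = l *\<^sub>R x" by (simp add: R_apply)
  then show ?thesis using that \<open>x \<in> U\<close> \<open>norm x = 1\<close> l_def by blast
qed

definition orthonormal_basis :: "'a::euclidean_space set \<Rightarrow> bool" where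
  "orthonormal_basis B \<longleftrightarrow> pairwise orthogonal B \<and> (\<forall>b\<in>B. norm b = 1) \<and> card B = DIM('a)"

lemma orthonormal_basis_finite: "orthonormal_basis B \<Longrightarrow> finite B"
  by (metis DIM_positive card.infinite less_irrefl orthonormal_basis_def)

lemma orthonormal_basis_inner:
  "orthonormal_basis B \<Longrightarrow> b \<in> B \<Longrightarrow> c \<in> B \<Longrightarrow> b \<bullet> c = (if b = c then 1 else 0)"
  by (auto simp: orthonormal_basis_def pairwise_def orthogonal_def norm_eq_1)

lemma orthonormal_basis_span:
  assumes "orthonormal_basis B"
  shows "span B = UNIV"
proof -
  have "pairwise orthogonal B" "0 \<notin> B" "card B = dim (UNIV :: 'a set)"
    using assms by (auto simp: orthonormal_basis_def)
  then show ?thesis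
    using card_eq_dim[of B UNIV] pairwise_orthogonal_independent orthonormal_basis_finite[OF assms]
    by auto
qed

lemma orthonormal_basis_expand_vector:
  "orthonormal_basis B \<Longrightarrow> (\<Sum>b\<in>B. (x \<bullet> b) *\<^sub>R b) = x"
  by (rule orthonormal_basis_expand)
    (auto simp: orthonormal_basis_def orthonormal_basis_span orthonormal_basis_finite)

lemma orthonormal_basis_image:
  fixes f :: "'a::euclidean_space \<Rightarrow> 'a"
  assumes B: "orthonormal_basis B"
    and unit: "\<And>b. b \<in> B \<Longrightarrow> norm (f b) = 1"
    and orth: "\<And>b c. b \<in> B \<Longrightarrow> c \<in> B \<Longrightarrow> b \<noteq> c \<Longrightarrow> f b \<bullet> f c = 0"
  shows "orthonormal_basis (f ` B)" and "inj_on f B"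
proof -
  show inj: "inj_on f B"
  proof (rule inj_onI, rule ccontr)
    fix b c assume "b \<in> B" "c \<in> B" "f b = f c" "b \<noteq> c"
    then show False using unit[of b] orth[of b c] by (simp add: norm_eq_1)
  qed
  show "orthonormal_basis (f ` B)"
    using B unit orth card_image[OF inj]
    by (auto simp: orthonormal_basis_def pairwise_def orthogonal_def)
qed

lemma symmetric_orthonormal_eigenbasis:
  fixes A :: "real^'n^'n"
  assumes sym: "transpose A = A"
  obtains B where "orthonormal_basis B" "\<And>b. b \<in> B \<Longrightarrow> A *v b = (b \<bullet> (A *v b)) *\<^sub>R b"
proof -
  have "\<exists>E. finite E \<and> pairwise orthogonal E \<and> (\<forall>e\<in>E. norm e = 1) \<and> card E = k
          \<and> (\<forall>e\<in>E. A *v e = (e \<bullet> (A *v e)) *\<^sub>R e)" if "k \<le> CARD('n)" for k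
    using that
  proof (induction k)
    case 0
    show ?case by (intro exI[of _ "{}"]) simp
  next
    case (Suc k)
    then obtain E where "finite E" "pairwise orthogonal E" "\<forall>e\<in>E. norm e = 1" "card E = k"
      and eig: "\<forall>e\<in>E. A *v e = (e \<bullet> (A *v e)) *\<^sub>R e"
      by auto
    have "dim E < DIM(real^'n)"
      using dim_le_card[OF span_superset \<open>finite E\<close>] Suc.prems \<open>card E = k\<close> by simp
    then obtain y where "y \<noteq> 0" and y_orth: "\<And>z. z \<in> span E \<Longrightarrow> orthogonal y z"
      using orthogonal_to_subspace_exists by blast
    define U where "U = {z. \<forall>e\<in>E. orthogonal e z}"
    have U: "subspace U" unfolding U_def by (rule subspace_orthogonal_to_vectors)
    have "y \<in> U" using y_orth span_base by (auto simp: U_def orthogonal_commute)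
    have "A *v z \<in> U" if "z \<in> U" for z
    proof -
      have "e \<bullet> (A *v z) = (e \<bullet> (A *v e)) * (e \<bullet> z)" if "e \<in> E" for e
        using eig that inner_matrix_vector_transpose[of e A z] sym by (metis inner_scaleR_left)
      then show ?thesis using \<open>z \<in> U\<close> by (auto simp: U_def orthogonal_def)
    qed
    then obtain x where "x \<in> U" "norm x = 1" "A *v x = (x \<bullet> (A *v x)) *\<^sub>R x"
      using symmetric_eigenvector_in_invariant_subspace[OF sym U \<open>y \<in> U\<close> \<open>y \<noteq> 0\<close>] by blast
    moreover have "x \<notin> E"
      using \<open>x \<in> U\<close> \<open>norm x = 1\<close> by (auto simp: U_def orthogonal_def norm_eq_1)
    ultimately show ?case
      using \<open>finite E\<close> \<open>pairwise orthogonal E\<close> \<open>\<forall>e\<in>E. norm e = 1\<close> \<open>card E = k\<close> eig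
      by (intro exI[of _ "insert x E"])
        (auto simp: U_def pairwise_insert orthogonal_commute)
  qed
  from this[of "CARD('n)"] show ?thesis
    using that by (auto simp: orthonormal_basis_def)
qed

lemma matrix_eq_on_orthonormal_basis:
  fixes A C :: "real^'n^'m"
  assumes "orthonormal_basis B" and "\<And>b. b \<in> B \<Longrightarrow> A *v b = C *v b"
  shows "A = C"
  unfolding matrix_eq
  using linear_eq_on_span[of "(*v) A" "(*v) C" B] assms orthonormal_basis_span
  by (metis UNIV_I matrix_vector_mul_linear)

lemma trace_eq_sum_orthonormal_basis:
  fixes S :: "real^'n^'n"
  assumes B: "orthonormal_basis B"
  shows "trace S = (\<Sum>b\<in>B. b \<bullet> (S *v b))"
proof -
  have "(\<Sum>b\<in>B. b \<bullet> (S *v b)) = (\<Sum>i\<in>UNIV. \<Sum>b\<in>B. (axis i 1 \<bullet> b) * (S *v b) $ i)"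
    unfolding inner_axis' by (simp add: inner_vec_def sum.swap[of _ B])
  also have "\<dots> = (\<Sum>i\<in>UNIV. (S *v (\<Sum>b\<in>B. (axis i 1 \<bullet> b) *\<^sub>R b)) $ i)"
    by (simp add: linear_sum[OF matrix_vector_mul_linear] matrix_vector_mult_scaleR)
  also have "\<dots> = (\<Sum>i\<in>UNIV. S $ i $ i)"
    by (simp add: orthonormal_basis_expand_vector[OF B] matrix_vector_mult_basis column_def)
  finally show ?thesis by (simp add: trace_def)
qed

definition spectral_sum :: "(real^'n) set \<Rightarrow> (real^'n \<Rightarrow> real) \<Rightarrow> real^'n^'n" where
  "spectral_sum B c = (\<chi> i j. \<Sum>b\<in>B. c b * b $ i * b $ j)"

lemma spectral_sum_mult_vector:
  assumes "finite B"
  shows "spectral_sum B c *v x = (\<Sum>b\<in>B. (c b * (b \<bullet> x)) *\<^sub>R b)"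
proof -
  have "(\<Sum>j\<in>UNIV. (\<Sum>b\<in>B. c b * b $ i * b $ j) * x $ j) = (\<Sum>b\<in>B. c b * (b \<bullet> x) * b $ i)" for i
    by (simp add: inner_vec_def sum_distrib_left sum_distrib_right sum.swap[of _ B] mult_ac)
  then show ?thesis
    by (simp add: vec_eq_iff spectral_sum_def matrix_vector_mult_def sum_component)
qed

lemma spectral_sum_eigenvector:
  assumes B: "orthonormal_basis B" and "b \<in> B"
  shows "spectral_sum B c *v b = c b *\<^sub>R b"
proof -
  have "spectral_sum B c *v b = (\<Sum>b'\<in>B. (c b' * (b' \<bullet> b)) *\<^sub>R b')"
    by (rule spectral_sum_mult_vector[OF orthonormal_basis_finite[OF B]])
  also have "\<dots> = (\<Sum>b'\<in>B. if b' = b then c b *\<^sub>R b else 0)"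
    by (rule sum.cong) (auto simp: orthonormal_basis_inner[OF B] \<open>b \<in> B\<close>)
  also have "\<dots> = c b *\<^sub>R b"
    using \<open>b \<in> B\<close> orthonormal_basis_finite[OF B] by simp
  finally show ?thesis .
qed

lemma spectral_sum_psd:
  assumes "finite B" and "\<And>b. b \<in> B \<Longrightarrow> 0 \<le> c b"
  shows "psd_rmat (spectral_sum B c)"
proof -
  have "x \<bullet> (spectral_sum B c *v x) = (\<Sum>b\<in>B. c b * (b \<bullet> x)\<^sup>2)" for x
    using assms(1)
    by (simp add: spectral_sum_mult_vector inner_sum_right power2_eq_square inner_commute[of x] mult.assoc)
  then show ?thesis
    using assms
    by (simp add: psd_rmat_def symmetric_mat_def spectral_sum_def transpose_def vec_eq_iff
        mult_ac sum_nonneg)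
qed

lemma psd_rmat_kernel:
  assumes P: "psd_rmat P" and null: "x \<bullet> (P *v x) = 0"
  shows "P *v x = 0"
proof -
  have "transpose P = P" "\<And>z. 0 \<le> z \<bullet> (P *v z)"
    using P by (auto simp: psd_rmat_def symmetric_mat_def)
  then have "(P *v x) \<bullet> (P *v x) = 0"
    using psd_form_null_vector_orthogonal[OF _ subspace_UNIV _ UNIV_I UNIV_I null] by blast
  then show ?thesis by simp
qed

lemma psd_rmat_sqrt_unique:
  fixes P Q :: "real^'n^'n"
  assumes P: "psd_rmat P" and Q: "psd_rmat Q" and sq: "P ** P = Q ** Q"
  shows "P = Q"
proof -
  have symP: "transpose P = P" and symQ: "transpose Q = Q"
    and nonneg: "\<And>z. 0 \<le> z \<bullet> (P *v z)" "\<And>z. 0 \<le> z \<bullet> (Q *v z)"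
    using P Q by (auto simp: psd_rmat_def symmetric_mat_def)
  have "transpose (Q - P) = Q - P"
    using symP symQ by (simp add: transpose_def vec_eq_iff)
  then obtain B where B: "orthonormal_basis B"
    and eig: "\<And>b. b \<in> B \<Longrightarrow> (Q - P) *v b = (b \<bullet> ((Q - P) *v b)) *\<^sub>R b"
    using symmetric_orthonormal_eigenbasis by blast
  have "Q *v b = P *v b" if "b \<in> B" for b
  proof -
    define m where "m = b \<bullet> ((Q - P) *v b)"
    have "b \<bullet> b = 1" using B \<open>b \<in> B\<close> by (simp add: orthonormal_basis_inner)
    have Qb: "Q *v b = P *v b + m *\<^sub>R b"
      using eig[OF that] by (simp add: m_def matrix_vector_mult_diff_rdistrib algebra_simps)
    have "(Q *v b) \<bullet> (Q *v b) = (P *v b) \<bullet> (P *v b)"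
      using sq symmetric_matrix_vector_inner_self[OF symP] symmetric_matrix_vector_inner_self[OF symQ]
      by metis
    moreover have "(Q *v b) \<bullet> (Q *v b) = (P *v b) \<bullet> (P *v b) + m * (b \<bullet> (P *v b) + b \<bullet> (Q *v b))"
      using \<open>b \<bullet> b = 1\<close>
      by (simp add: Qb inner_add_left inner_add_right inner_commute[of "P *v b" b] algebra_simps)
    ultimately have "m = 0 \<or> b \<bullet> (P *v b) + b \<bullet> (Q *v b) = 0"
      by simp
    then show ?thesis
    proof
      assume "b \<bullet> (P *v b) + b \<bullet> (Q *v b) = 0"
      then have "P *v b = 0" "Q *v b = 0"
        using nonneg[of b] psd_rmat_kernel P Q by (metis add_nonneg_eq_0_iff)+
      then show ?thesis by simp
    qed (simp add: Qb)
  qed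
  then show ?thesis
    using matrix_eq_on_orthonormal_basis[OF B] by metis
qed

lemma abs_mat_eigenbasis:
  fixes K :: "real^'n^'n"
  obtains B where "orthonormal_basis B"
    and "\<And>b. b \<in> B \<Longrightarrow> transpose K *v (K *v b) = (norm (K *v b))\<^sup>2 *\<^sub>R b"
    and "\<And>b. b \<in> B \<Longrightarrow> abs_mat K *v b = norm (K *v b) *\<^sub>R b"
proof (rule symmetric_orthonormal_eigenbasis[of "transpose K ** K"])
  show "transpose (transpose K ** K) = transpose K ** K"
    by (simp add: matrix_transpose_mul)
next
  fix B assume B: "orthonormal_basis B"
    and eig0: "\<And>b. b \<in> B \<Longrightarrow> (transpose K ** K) *v b = (b \<bullet> ((transpose K ** K) *v b)) *\<^sub>R b"
  have eig: "transpose K *v (K *v b) = (norm (K *v b))\<^sup>2 *\<^sub>R b" if "b \<in> B" for b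
  proof -
    have "b \<bullet> ((transpose K ** K) *v b) = (K *v b) \<bullet> (K *v b)"
      using inner_matrix_vector_transpose[of b "transpose K" "K *v b"]
      by (simp only: matrix_vector_mul_assoc transpose_transpose)
    then show ?thesis
      using eig0[OF that] by (simp only: matrix_vector_mul_assoc power2_norm_eq_inner)
  qed
  define P where "P = spectral_sum B (\<lambda>b. norm (K *v b))"
  have Pb: "P *v b = norm (K *v b) *\<^sub>R b" if "b \<in> B" for b
    unfolding P_def using B that by (rule spectral_sum_eigenvector)
  have P_psd: "psd_rmat P"
    unfolding P_def using orthonormal_basis_finite[OF B] by (rule spectral_sum_psd) simp
  have P_sq: "P ** P = transpose K ** K"
  proof (rule matrix_eq_on_orthonormal_basis[OF B])
    fix b assume "b \<in> B"
    have "(P ** P) *v b = norm (K *v b) *\<^sub>R (P *v b)"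
      by (simp only: Pb[OF \<open>b \<in> B\<close>] matrix_vector_mul_assoc[symmetric] matrix_vector_mult_scaleR)
    also have "\<dots> = transpose K *v (K *v b)"
      by (simp only: eig[OF \<open>b \<in> B\<close>] Pb[OF \<open>b \<in> B\<close>] scaleR_scaleR power2_eq_square)
    finally show "(P ** P) *v b = (transpose K ** K) *v b"
      by (simp only: matrix_vector_mul_assoc)
  qed
  have "abs_mat K = P"
    unfolding abs_mat_def
  proof (rule the_equality)
    show "psd_rmat P \<and> P ** P = transpose K ** K" using P_psd P_sq ..
    fix Q assume "psd_rmat Q \<and> Q ** Q = transpose K ** K"
    then have "psd_rmat Q" "Q ** Q = P ** P" using P_sq by auto
    then show "Q = P" by (metis psd_rmat_sqrt_unique P_psd)
  qed
  then show ?thesis using that[OF B eig] Pb by simp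
qed

(* On an eigenbasis of K^T K this is the orthogonal factor U of the polar decomposition
   K = U |K|, completed by the identity on the kernel of K. *)
definition polar_partner :: "real^'n^'n \<Rightarrow> real^'n \<Rightarrow> real^'n" where
  "polar_partner K b = (if K *v b = 0 then b else (K *v b) /\<^sub>R norm (K *v b))"

lemma polar_partner_orthonormal_basis:
  fixes K :: "real^'n^'n"
  assumes antisym: "transpose K = - K" and B: "orthonormal_basis B"
    and eig: "\<And>b. b \<in> B \<Longrightarrow> transpose K *v (K *v b) = (norm (K *v b))\<^sup>2 *\<^sub>R b"
  shows "orthonormal_basis (polar_partner K ` B)" and "inj_on (polar_partner K) B"
proof -
  have unit: "norm (polar_partner K b) = 1" if "b \<in> B" for b
    using B that by (simp add: polar_partner_def orthonormal_basis_def)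
  have orth: "polar_partner K b \<bullet> polar_partner K c = 0" if "b \<in> B" "c \<in> B" "b \<noteq> c" for b c
  proof -
    have "b \<bullet> c = 0" using orthonormal_basis_inner[OF B] that by simp
    moreover have "(K *v b) \<bullet> (K *v c) = 0"
      using inner_matrix_vector_transpose[of b "transpose K" "K *v c"] eig[OF \<open>c \<in> B\<close>] \<open>b \<bullet> c = 0\<close>
      by simp
    moreover have "b \<bullet> (K *v c) = 0" if "K *v b = 0"
      using antisymmetric_inner_matrix_vector[OF antisym, of b c] that by simp
    moreover have "(K *v b) \<bullet> c = 0" if "K *v c = 0"
      using antisymmetric_inner_matrix_vector[OF antisym, of b c] that by simp
    ultimately show ?thesis by (simp add: polar_partner_def)
  qed
  show "orthonormal_basis (polar_partner K ` B)"
    by (rule orthonormal_basis_image(1)[OF B unit orth])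
  show "inj_on (polar_partner K) B"
    by (rule orthonormal_basis_image(2)[OF B unit orth])
qed

lemma polar_partner_form_bound:
  fixes K S :: "real^'n^'n"
  assumes antisym: "transpose K = - K"
    and form: "\<And>u v. 0 \<le> u \<bullet> (S *v u) + v \<bullet> (S *v v) + u \<bullet> (K *v v) - v \<bullet> (K *v u)"
  shows "2 * norm (K *v b) \<le> b \<bullet> (S *v b) + polar_partner K b \<bullet> (S *v polar_partner K b)"
proof (cases "K *v b = 0")
  case True
  then show ?thesis using form[of b b] by (simp add: polar_partner_def)
next
  case False
  define n where "n = norm (K *v b)"
  define w where "w = (K *v b) /\<^sub>R n"
  have "n \<noteq> 0" using False by (simp add: n_def)
  have "b \<bullet> (K *v w) = - n"
    using antisymmetric_inner_matrix_vector[OF antisym, of b "K *v b"] \<open>n \<noteq> 0\<close>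
    by (simp add: w_def matrix_vector_mult_scaleR n_def power2_norm_eq_inner[symmetric] power2_eq_square)
  moreover have "w \<bullet> (K *v b) = n"
    using \<open>n \<noteq> 0\<close> by (simp add: w_def n_def power2_norm_eq_inner[symmetric] power2_eq_square)
  ultimately show ?thesis
    using form[of b w] False by (simp add: polar_partner_def w_def n_def)
qed

lemma trace_abs_mat_le_trace:
  fixes K S :: "real^'n^'n"
  assumes antisym: "transpose K = - K"
    and form: "\<And>u v. 0 \<le> u \<bullet> (S *v u) + v \<bullet> (S *v v) + u \<bullet> (K *v v) - v \<bullet> (K *v u)"
  shows "trace (abs_mat K) \<le> trace S"
proof (rule abs_mat_eigenbasis[of K])
  fix B assume B: "orthonormal_basis B"
    and eig: "\<And>b. b \<in> B \<Longrightarrow> transpose K *v (K *v b) = (norm (K *v b))\<^sup>2 *\<^sub>R b"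
    and abs_eig: "\<And>b. b \<in> B \<Longrightarrow> abs_mat K *v b = norm (K *v b) *\<^sub>R b"
  let ?w = "polar_partner K"
  have wB: "orthonormal_basis (?w ` B)" and inj: "inj_on ?w B"
    using polar_partner_orthonormal_basis[OF antisym B eig] by blast+
  have "trace (abs_mat K) = (\<Sum>b\<in>B. b \<bullet> (abs_mat K *v b))"
    by (rule trace_eq_sum_orthonormal_basis[OF B])
  also have "\<dots> = (\<Sum>b\<in>B. norm (K *v b))"
    by (rule sum.cong) (simp_all add: abs_eig orthonormal_basis_inner[OF B])
  finally have "2 * trace (abs_mat K) = (\<Sum>b\<in>B. 2 * norm (K *v b))"
    by (simp only: sum_distrib_left)
  also have "\<dots> \<le> (\<Sum>b\<in>B. b \<bullet> (S *v b) + ?w b \<bullet> (S *v ?w b))"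
    by (rule sum_mono) (rule polar_partner_form_bound[OF antisym form])
  also have "\<dots> = (\<Sum>b\<in>B. b \<bullet> (S *v b)) + (\<Sum>c\<in>?w ` B. c \<bullet> (S *v c))"
    by (simp only: sum.distrib sum.reindex[OF inj] o_def)
  also have "\<dots> = 2 * trace S"
    by (simp only: trace_eq_sum_orthonormal_basis[OF B, symmetric]
        trace_eq_sum_orthonormal_basis[OF wB, symmetric] mult_2)
  finally show ?thesis by simp
qed

lemma psd_cmat_real_form:
  fixes A :: "complex^'d^'d"
  assumes "psd_cmat A"
  shows "0 \<le> u \<bullet> (Re_mat A *v u) + v \<bullet> (Re_mat A *v v) + v \<bullet> (Im_mat A *v u) - u \<bullet> (Im_mat A *v v)"
proof -
  define x :: "complex^'d" where "x = (\<chi> i. Complex (u $ i) (v $ i))"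
  have "0 \<le> Re (\<Sum>i\<in>UNIV. \<Sum>j\<in>UNIV. cnj (x $ i) * A $ i $ j * x $ j)"
    using assms by (simp add: psd_cmat_def)
  also have "\<dots> = (\<Sum>i\<in>UNIV. \<Sum>j\<in>UNIV. u $ i * (Re_mat A $ i $ j * u $ j) + v $ i * (Re_mat A $ i $ j * v $ j)
      + v $ i * (Im_mat A $ i $ j * u $ j) - u $ i * (Im_mat A $ i $ j * v $ j))"
    by (simp add: Re_sum x_def Re_mat_def Im_mat_def algebra_simps)
  also have "\<dots> = u \<bullet> (Re_mat A *v u) + v \<bullet> (Re_mat A *v v) + v \<bullet> (Im_mat A *v u) - u \<bullet> (Im_mat A *v v)"
    by (simp add: inner_vec_def matrix_vector_mult_def sum_distrib_left sum.distrib sum_subtractf)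
  finally show ?thesis .
qed

lemma Re_mat_cmat_of_rmat_diff: "Re_mat (cmat_of_rmat V - W) = V - Re_mat W"
  by (simp add: Re_mat_def cmat_of_rmat_def vec_eq_iff)

lemma Im_mat_cmat_of_rmat_diff: "Im_mat (cmat_of_rmat V - W) = - Im_mat W"
  by (simp add: Im_mat_def cmat_of_rmat_def vec_eq_iff)

lemma hermitian_Im_mat_antisymmetric:
  assumes "hermitian_mat W"
  shows "transpose (Im_mat W) = - Im_mat W"
proof -
  have adj: "W $ i $ j = cnj (W $ j $ i)" for i j
    using arg_cong[OF assms[unfolded hermitian_mat_def], of "\<lambda>M. M $ i $ j"]
    by (simp add: adjoint_mat_def cnj_mat_def transpose_def)
  have "transpose (Im_mat W) $ i $ j = (- Im_mat W) $ i $ j" for i j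
    using adj[of j i] by (simp add: transpose_def Im_mat_def)
  then show ?thesis by (simp add: vec_eq_iff)
qed

theorem lemma3:
  fixes V :: "real^'d^'d" and W :: "complex^'d^'d"
  assumes "symmetric_mat V"
    and "hermitian_mat W"
    and "psd_cmat (cmat_of_rmat V - W)"
  shows "trace V \<ge> trace (Re_mat W) + trace (abs_mat (Im_mat W))"
proof -
  have "0 \<le> u \<bullet> ((V - Re_mat W) *v u) + v \<bullet> ((V - Re_mat W) *v v)
      + u \<bullet> (Im_mat W *v v) - v \<bullet> (Im_mat W *v u)" for u v
    using psd_cmat_real_form[OF assms(3), of u v]
    by (simp add: Re_mat_cmat_of_rmat_diff Im_mat_cmat_of_rmat_diff matrix_vector_mult_uminus_left)
  then have "trace (abs_mat (Im_mat W)) \<le> trace (V - Re_mat W)"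
    by (rule trace_abs_mat_le_trace[OF hermitian_Im_mat_antisymmetric[OF assms(2)]])
  then show ?thesis by (simp add: trace_sub)
qed

end
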